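(* Let $p$ be a prime and $X=\Delta_p$. Then there exist independent random variables $\xi_1,\xi_2$ with values in $X$ and distributions $\mu_1,\mu_2$ such that the conditional distribution of $L_2=\xi_1+p\xi_2$ given $L_1=p\xi_1-\xi_2$ is symmetric and $\mu_1,\mu_2\notin I(X)$.
   Context: $\Delta_p$ denotes the compact group of $p$-adic integers. $I(X)$ is the set of shifts of Haar distributions $m_K$ of compact subgroups $K$ of $X$. For random variables $L_1,L_2$ with values in $X$, the conditional distribution of $L_2$ given $L_1$ is called symmetric if the pairs $(L_1,L_2)$ and $(L_1,-L_2)$ are identically distributed. *)

theory Defs
  imports "HOL-Probability.Probability"
begin

text \<open>An element of Delta_p is represented by its compatible sequence of residues
  x n in {0..<p^n} (x n = the residue of the p-adic integer modulo p^n), with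
  x (Suc n) mod p^n = x n.  This is the inverse limit of Z/p^n Z.\<close>

definition padic :: "nat \<Rightarrow> (nat \<Rightarrow> int) set" where
  "padic p = {x. (\<forall>n. 0 \<le> x n \<and> x n < int p ^ n) \<and>
                 (\<forall>n. x (Suc n) mod int p ^ n = x n)}"

definition padic_zero :: "nat \<Rightarrow> nat \<Rightarrow> int" where
  "padic_zero p = (\<lambda>n. 0)"

definition padic_add :: "nat \<Rightarrow> (nat \<Rightarrow> int) \<Rightarrow> (nat \<Rightarrow> int) \<Rightarrow> (nat \<Rightarrow> int)" where
  "padic_add p x y = (\<lambda>n. (x n + y n) mod int p ^ n)"

definition padic_neg :: "nat \<Rightarrow> (nat \<Rightarrow> int) \<Rightarrow> (nat \<Rightarrow> int)" where
  "padic_neg p x = (\<lambda>n. (- x n) mod int p ^ n)"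

definition padic_smul :: "nat \<Rightarrow> int \<Rightarrow> (nat \<Rightarrow> int) \<Rightarrow> (nat \<Rightarrow> int)" where
  "padic_smul p c x = (\<lambda>n. (c * x n) mod int p ^ n)"

text \<open>The topology of Delta_p: the inverse-limit topology, i.e. the subspace topology
  induced by the product of discrete topologies on the residue sequences.\<close>
definition padic_top :: "nat \<Rightarrow> (nat \<Rightarrow> int) topology" where
  "padic_top p = subtopology (product_topology (\<lambda>n. discrete_topology UNIV) UNIV) (padic p)"

definition padic_borel :: "nat \<Rightarrow> (nat \<Rightarrow> int) measure" where
  "padic_borel p = sigma (topspace (padic_top p)) {U. openin (padic_top p) U}"

definition padic_compact_subgroup :: "nat \<Rightarrow> (nat \<Rightarrow> int) set \<Rightarrow> bool" where
  "padic_compact_subgroup p K \<longleftrightarrow>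
     K \<subseteq> padic p \<and> padic_zero p \<in> K \<and>
     (\<forall>x\<in>K. \<forall>y\<in>K. padic_add p x y \<in> K) \<and> (\<forall>x\<in>K. padic_neg p x \<in> K) \<and>
     compactin (padic_top p) K"

text \<open>mu is the (normalized) Haar distribution m_K of the compact subgroup K,
  regarded as a distribution on X: a probability distribution on X concentrated on K
  and invariant under all translations by elements of K.\<close>
definition padic_haar :: "nat \<Rightarrow> (nat \<Rightarrow> int) set \<Rightarrow> (nat \<Rightarrow> int) measure \<Rightarrow> bool" where
  "padic_haar p K \<mu> \<longleftrightarrow>
     prob_space \<mu> \<and> sets \<mu> = sets (padic_borel p) \<and> K \<in> sets \<mu> \<and> emeasure \<mu> K = 1 \<and>
     (\<forall>k\<in>K. distr \<mu> (padic_borel p) (padic_add p k) = \<mu>)"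

definition padic_I :: "nat \<Rightarrow> (nat \<Rightarrow> int) measure \<Rightarrow> bool" where
  "padic_I p \<mu> \<longleftrightarrow>
     (\<exists>K \<nu> a. padic_compact_subgroup p K \<and> padic_haar p K \<nu> \<and> a \<in> padic p \<and>
              \<mu> = distr \<nu> (padic_borel p) (padic_add p a))"

end

theory Submission
  imports Defs
begin

(* Let xi1, xi2 be independent with the same law mu: the Haar measure of Delta_p reweighted so that
   p Delta_p gets mass 1/4 and each of the other p - 1 cosets of p Delta_p gets mass 3/(4(p-1)).
   The maps (x, y) |-> (px - y, x + py) and (x, y) |-> (px - y, -x - py) are automorphisms of
   Delta_p^2 (their determinants +-(p^2 + 1) are units), so the mass their images of mu x mu give
   to a product of cylinders is the (mu x mu)-mass of the preimage, again a product of cylinders.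
   Modulo p both maps are anti-diagonal with unit entries, hence the two preimages lie in the same
   cosets of p Delta_p and have the same mass: (L1, L2) and (L1, -L2) are identically distributed.
   Finally mu is not in I(X). If the compact subgroup K is not contained in p Delta_p, mu would be
   invariant under a translation moving p Delta_p onto another coset, forcing 1/4 = 3/(4(p-1)),
   i.e. p = 4. If K is contained in p Delta_p, a shift of m_K is concentrated on a single coset,
   whereas every coset has mu-mass less than 1. *)

lemma measurable_count_space_apply2:
  fixes f :: "'a \<Rightarrow> 'b::countable" and g :: "'a \<Rightarrow> 'c::countable"
  assumes "f \<in> M \<rightarrow>\<^sub>M count_space UNIV" "g \<in> M \<rightarrow>\<^sub>M count_space UNIV"
  shows "(\<lambda>x. h (f x) (g x)) \<in> M \<rightarrow>\<^sub>M count_space UNIV"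
proof (rule measurable_compose_countable[OF _ assms(1)])
  fix i
  show "(\<lambda>x. h i (g x)) \<in> M \<rightarrow>\<^sub>M count_space UNIV"
    using measurable_compose[OF assms(2), of "h i" "count_space UNIV"] by simp
qed

lemma distr_pair_snd:
  assumes "prob_space M" "prob_space N"
  shows "distr (M \<Otimes>\<^sub>M N) N snd = N"
proof (rule measure_eqI)
  interpret M: prob_space M by (rule assms(1))
  interpret N: prob_space N by (rule assms(2))
  fix A assume "A \<in> sets (distr (M \<Otimes>\<^sub>M N) N snd)"
  then have A: "A \<in> sets N" by simp
  then have "snd -` A \<inter> space (M \<Otimes>\<^sub>M N) = space M \<times> A"
    using sets.sets_into_space by (auto simp: space_pair_measure)
  then show "emeasure (distr (M \<Otimes>\<^sub>M N) N snd) A = emeasure N A"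
    using A by (simp add: emeasure_distr N.emeasure_pair_measure_Times M.emeasure_space_1)
qed simp

lemma indep_var_fst_snd:
  assumes M: "prob_space M" and N: "prob_space N" and sets: "sets S = sets M" "sets T = sets N"
  shows "prob_space.indep_var (M \<Otimes>\<^sub>M N) S fst T snd"
proof -
  interpret N: prob_space N by (rule N)
  interpret MN: prob_space "M \<Otimes>\<^sub>M N" by (intro prob_space_pair M N)
  have "distr (M \<Otimes>\<^sub>M N) S fst = M"
    using N.distr_pair_fst[of M] sets by (simp cong: distr_cong)
  moreover have "distr (M \<Otimes>\<^sub>M N) T snd = N"
    using distr_pair_snd[OF M N] sets by (simp cong: distr_cong)
  moreover have "distr (M \<Otimes>\<^sub>M N) (S \<Otimes>\<^sub>M T) (\<lambda>x. (fst x, snd x)) = M \<Otimes>\<^sub>M N"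
    using distr_id[of "M \<Otimes>\<^sub>M N"] sets by (simp cong: distr_cong sets_pair_measure_cong)
  ultimately show ?thesis
    using sets by (simp add: MN.indep_var_distribution_eq cong: measurable_cong_sets)
qed

lemma dvd_of_dvd_linear_combinations:
  fixes a b c d u v q :: int
  assumes det: "coprime (a * d - b * c) q"
    and "q dvd a * u + b * v" "q dvd c * u + d * v"
  shows "q dvd u" "q dvd v"
proof -
  have "(a * d - b * c) * u = d * (a * u + b * v) - b * (c * u + d * v)"
    "(a * d - b * c) * v = a * (c * u + d * v) - c * (a * u + b * v)"
    by (simp_all add: algebra_simps)
  then have "q dvd (a * d - b * c) * u" "q dvd (a * d - b * c) * v"
    using assms(2,3) by simp_all
  then show "q dvd u" "q dvd v"
    using det by (simp_all add: coprime_commute coprime_dvd_mult_right_iff)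
qed

lemma bij_betw_linear_residues:
  fixes a b c d q :: int
  assumes "0 < q" "coprime (a * d - b * c) q"
  shows "bij_betw (\<lambda>(x, y). ((a * x + b * y) mod q, (c * x + d * y) mod q))
    ({0..<q} \<times> {0..<q}) ({0..<q} \<times> {0..<q})"
proof -
  let ?f = "\<lambda>(x, y). ((a * x + b * y) mod q, (c * x + d * y) mod q)"
  have residue_eq: "u = u'" if "u \<in> {0..<q}" "u' \<in> {0..<q}" "q dvd u - u'" for u u'
  proof -
    have "u mod q = u' mod q" using that(3) by (simp add: mod_eq_dvd_iff)
    then show ?thesis using that(1,2) by simp
  qed
  have "inj_on ?f ({0..<q} \<times> {0..<q})"
  proof (rule inj_onI)
    fix z z' assume z: "z \<in> {0..<q} \<times> {0..<q}" "z' \<in> {0..<q} \<times> {0..<q}" and eq: "?f z = ?f z'"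
    obtain x y x' y' where xy: "z = (x, y)" "z' = (x', y')" by fastforce
    have "(a * x + b * y) mod q = (a * x' + b * y') mod q" "(c * x + d * y) mod q = (c * x' + d * y') mod q"
      using eq by (simp_all add: xy)
    then have "q dvd a * (x - x') + b * (y - y')" "q dvd c * (x - x') + d * (y - y')"
      by (simp_all only: mod_eq_dvd_iff) (simp_all add: algebra_simps)
    then have "q dvd x - x'" "q dvd y - y'"
      using dvd_of_dvd_linear_combinations[OF assms(2)] by blast+
    then show "z = z'"
      using z residue_eq by (auto simp: xy)
  qed
  moreover have "?f ` ({0..<q} \<times> {0..<q}) \<subseteq> {0..<q} \<times> {0..<q}"
    using assms(1) by auto
  ultimately show ?thesis
    by (simp add: bij_betw_def endo_inj_surj)
qed

lemma mod_power_div_power_mod: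
  fixes q r :: int
  assumes "i < n" "0 < q"
  shows "r mod q ^ n div q ^ i mod q = r div q ^ i mod q"
proof -
  obtain k where n: "n = i + Suc k" using assms(1) by (metis less_iff_Suc_add add_Suc_right)
  have "r mod q ^ n = q ^ i * (r div q ^ i mod q ^ Suc k) + r mod q ^ i"
    unfolding n power_add by (rule zmod_zmult2_eq) (use assms(2) in simp)
  then have "r mod q ^ n div q ^ i = r div q ^ i mod q ^ Suc k"
    using assms(2) by simp
  then show ?thesis by (simp add: mod_mod_cancel)
qed

lemma padic_range: "x \<in> padic p \<Longrightarrow> 0 \<le> x n \<and> x n < int p ^ n"
  by (simp add: padic_def)

lemma padic_level_zero: "x \<in> padic p \<Longrightarrow> x 0 = 0"
  using padic_range[of x p 0] by simp

lemma padic_mod_power: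
  assumes x: "x \<in> padic p" and "m \<le> n"
  shows "x n mod int p ^ m = x m"
  using \<open>m \<le> n\<close>
proof (induction n)
  case 0
  then show ?case using padic_range[OF x, of 0] by simp
next
  case (Suc n)
  show ?case
  proof (cases "m = Suc n")
    case True
    then show ?thesis using padic_range[OF x, of m] by simp
  next
    case False
    then have "m \<le> n" using Suc.prems by simp
    then have "x (Suc n) mod int p ^ m = x (Suc n) mod int p ^ n mod int p ^ m"
      by (simp add: mod_mod_cancel le_imp_power_dvd)
    also have "\<dots> = x m"
      using x Suc.IH[OF \<open>m \<le> n\<close>] by (simp add: padic_def)
    finally show ?thesis .
  qed
qed

lemma topspace_padic_top [simp]: "topspace (padic_top p) = padic p"
  by (simp add: padic_top_def)

lemma space_padic_borel [simp]: "space (padic_borel p) = padic p"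
  unfolding padic_borel_def by (simp add: openin_subset space_measure_of_conv)

definition padic_cyl :: "nat \<Rightarrow> nat \<Rightarrow> int \<Rightarrow> (nat \<Rightarrow> int) set" where
  "padic_cyl p n r = {x \<in> padic p. x n = r}"

lemma padic_cyl_subset: "padic_cyl p n r \<subseteq> padic p"
  by (auto simp: padic_cyl_def)

lemma padic_cyl_level_zero: "padic_cyl p 0 0 = padic p"
  by (auto simp: padic_cyl_def padic_level_zero)

lemma padic_cyl_eq_empty: "\<not> (0 \<le> r \<and> r < int p ^ n) \<Longrightarrow> padic_cyl p n r = {}"
  using padic_range[of _ p n] by (auto simp: padic_cyl_def)

lemma padic_cyl_refine:
  assumes "n \<le> m"
  shows "padic_cyl p n r = (\<Union>t\<in>{t. t mod int p ^ n = r}. padic_cyl p m t)"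
  using padic_mod_power[OF _ assms, of _ p] by (auto simp: padic_cyl_def)

lemma padic_cyl_Int:
  assumes "n \<le> m"
  shows "padic_cyl p n r \<inter> padic_cyl p m s = (if s mod int p ^ n = r then padic_cyl p m s else {})"
  using padic_mod_power[OF _ assms, of _ p] by (auto simp: padic_cyl_def)

lemma openin_padic_cyl: "openin (padic_top p) (padic_cyl p n r)"
proof -
  let ?U = "\<lambda>i. if i = n then {r} else UNIV"
  have "{x. x n = r} = Pi\<^sub>E UNIV ?U"
    by (auto simp: PiE_def Pi_def split: if_splits)
  moreover have "openin (product_topology (\<lambda>n. discrete_topology (UNIV::int set)) UNIV) (Pi\<^sub>E UNIV ?U)"
    by (intro product_topology_basis) auto
  ultimately show ?thesis
    unfolding padic_top_def openin_subtopology padic_cyl_def by auto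
qed

lemma openin_padic_top_eq_Union_cyl:
  assumes U: "openin (padic_top p) U"
  shows "U = \<Union>{padic_cyl p n r | n r. padic_cyl p n r \<subseteq> U}"
proof (intro equalityI subsetI)
  fix x assume "x \<in> U"
  from U obtain T where T: "openin (product_topology (\<lambda>n. discrete_topology (UNIV::int set)) UNIV) T"
    and UT: "U = T \<inter> padic p"
    unfolding padic_top_def openin_subtopology by blast
  have x: "x \<in> T" "x \<in> padic p" using \<open>x \<in> U\<close> UT by auto
  from T x(1) obtain V where fin: "finite {i. V i \<noteq> UNIV}"
    and xV: "x \<in> Pi\<^sub>E UNIV V" and VT: "Pi\<^sub>E UNIV V \<subseteq> T"
    unfolding openin_product_topology_alt by auto
  obtain N where N: "\<And>i. V i \<noteq> UNIV \<Longrightarrow> i < N"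
    using finite_nat_bounded[OF fin] by auto
  have "padic_cyl p N (x N) \<subseteq> U"
  proof
    fix y assume "y \<in> padic_cyl p N (x N)"
    then have y: "y \<in> padic p" "y N = x N" by (auto simp: padic_cyl_def)
    have "y i \<in> V i" for i
    proof (cases "V i = UNIV")
      case False
      then have "y i = x i"
        using N padic_mod_power[OF y(1), of i N] padic_mod_power[OF x(2), of i N] y(2)
        by (metis less_imp_le)
      then show ?thesis using xV by auto
    qed simp
    then show "y \<in> U" using VT y(1) UT by auto
  qed
  moreover have "x \<in> padic_cyl p N (x N)" using x(2) by (simp add: padic_cyl_def)
  ultimately show "x \<in> \<Union>{padic_cyl p n r | n r. padic_cyl p n r \<subseteq> U}" by blast
qed blast

definition padic_cyl_rects :: "nat \<Rightarrow> ((nat \<Rightarrow> int) \<times> (nat \<Rightarrow> int)) set set" where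
  "padic_cyl_rects p = {padic_cyl p n r \<times> padic_cyl p n s | n r s. True}"

lemma Int_stable_padic_cyl_rects: "Int_stable (padic_cyl_rects p)"
proof -
  have Int_rect: "(padic_cyl p n r \<times> padic_cyl p n s) \<inter> (padic_cyl p m r' \<times> padic_cyl p m s')
      \<in> padic_cyl_rects p" if "n \<le> m" for n m r s r' s'
  proof -
    have "padic_cyl p 0 1 = {}" by (simp add: padic_cyl_eq_empty)
    then have "{} \<in> padic_cyl_rects p"
      unfolding padic_cyl_rects_def by blast
    then show ?thesis
      unfolding Times_Int_Times padic_cyl_Int[OF \<open>n \<le> m\<close>]
      by (auto simp: padic_cyl_rects_def)
  qed
  show ?thesis
  proof (rule Int_stableI)
    fix A B assume "A \<in> padic_cyl_rects p" "B \<in> padic_cyl_rects p"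
    then obtain n r s m r' s' where
      "A = padic_cyl p n r \<times> padic_cyl p n s" "B = padic_cyl p m r' \<times> padic_cyl p m s'"
      by (auto simp: padic_cyl_rects_def)
    then show "A \<inter> B \<in> padic_cyl_rects p"
      using Int_rect[of n m] Int_rect[of m n] by (cases "n \<le> m") (auto simp: Int_commute)
  qed
qed

lemma padic_cyl_Times_in_sigma_rects:
  "padic_cyl p n r \<times> padic_cyl p m s \<in> sigma_sets (padic p \<times> padic p) (padic_cyl_rects p)"
proof -
  let ?S = "sigma_sets (padic p \<times> padic p) (padic_cyl_rects p)"
  have rect: "padic_cyl p k a \<times> padic_cyl p k b \<in> ?S" for k a b
    by (rule sigma_sets.Basic) (auto simp: padic_cyl_rects_def)
  show ?thesis
  proof (cases "n \<le> m")
    case True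
    have "padic_cyl p n r \<times> padic_cyl p m s
        = (\<Union>t\<in>{t. t mod int p ^ n = r}. padic_cyl p m t \<times> padic_cyl p m s)"
      unfolding padic_cyl_refine[OF True, of p r] by auto
    also have "\<dots> \<in> ?S"
      by (intro sigma_sets_UNION countable_image countableI_type) (auto simp: rect)
    finally show ?thesis .
  next
    case False
    then have "m \<le> n" by simp
    have "padic_cyl p n r \<times> padic_cyl p m s
        = (\<Union>t\<in>{t. t mod int p ^ m = s}. padic_cyl p n r \<times> padic_cyl p n t)"
      unfolding padic_cyl_refine[OF \<open>m \<le> n\<close>, of p s] by auto
    also have "\<dots> \<in> ?S"
      by (intro sigma_sets_UNION countable_image countableI_type) (auto simp: rect)
    finally show ?thesis .
  qed
qed

context
  fixes p :: nat
  assumes p_pos: "0 < p"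
begin

lemma sets_padic_borel_cyl:
  "sets (padic_borel p) = sigma_sets (padic p) (range (\<lambda>(n, r). padic_cyl p n r))"
proof -
  have "sets (padic_borel p) = sigma_sets (padic p) {U. openin (padic_top p) U}"
    unfolding padic_borel_def
    by (subst sets_measure_of) (use openin_subset[where U = "padic_top p"] in force)+
  also have "\<dots> = sigma_sets (padic p) (range (\<lambda>(n, r). padic_cyl p n r))"
  proof (rule sigma_sets_eqI)
    fix U assume "U \<in> {U. openin (padic_top p) U}"
    then have "U = \<Union>{padic_cyl p n r | n r. padic_cyl p n r \<subseteq> U}"
      by (simp add: openin_padic_top_eq_Union_cyl)
    also have "\<dots> = (\<Union>(n, r)\<in>{(n, r). padic_cyl p n r \<subseteq> U}. padic_cyl p n r)"
      by auto
    also have "\<dots> \<in> sigma_sets (padic p) (range (\<lambda>(n, r). padic_cyl p n r))"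
      by (intro sigma_sets_UNION) (auto intro: sigma_sets.Basic)
    finally show "U \<in> sigma_sets (padic p) (range (\<lambda>(n, r). padic_cyl p n r))" .
  next
    fix C assume "C \<in> range (\<lambda>(n, r). padic_cyl p n r)"
    then show "C \<in> sigma_sets (padic p) {U. openin (padic_top p) U}"
      using openin_padic_cyl by (auto intro: sigma_sets.Basic)
  qed
  finally show ?thesis .
qed

lemma padic_cyl_in_sets [measurable]: "padic_cyl p n r \<in> sets (padic_borel p)"
  by (auto simp: sets_padic_borel_cyl intro!: sigma_sets.Basic)

lemma measurable_padic_borelI:
  assumes "f \<in> space M \<rightarrow> padic p"
    and "\<And>n. (\<lambda>\<omega>. f \<omega> n) \<in> M \<rightarrow>\<^sub>M count_space UNIV"
  shows "f \<in> M \<rightarrow>\<^sub>M padic_borel p"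
proof (rule measurable_sigma_sets[OF sets_padic_borel_cyl])
  show "range (\<lambda>(n, r). padic_cyl p n r) \<subseteq> Pow (padic p)"
    using padic_cyl_subset by auto
  fix C assume "C \<in> range (\<lambda>(n, r). padic_cyl p n r)"
  then obtain n r where C: "C = padic_cyl p n r" by auto
  have "f -` C \<inter> space M = (\<lambda>\<omega>. f \<omega> n) -` {r} \<inter> space M"
    using assms(1) by (auto simp: C padic_cyl_def)
  then show "f -` C \<inter> space M \<in> sets M"
    using measurable_sets[OF assms(2), of "{r}"] by simp
qed (use assms(1) in simp)

lemma measurable_padic_level:
  "(\<lambda>x. x n) \<in> padic_borel p \<rightarrow>\<^sub>M count_space UNIV"
proof (subst measurable_count_space_eq2_countable, intro conjI ballI)
  fix r :: int
  have "(\<lambda>x. x n) -` {r} \<inter> space (padic_borel p) = padic_cyl p n r"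
    by (auto simp: padic_cyl_def)
  then show "(\<lambda>x. x n) -` {r} \<inter> space (padic_borel p) \<in> sets (padic_borel p)"
    by simp
qed simp

lemma sets_pair_padic_borel:
  "sets (padic_borel p \<Otimes>\<^sub>M padic_borel p) = sigma_sets (padic p \<times> padic p) (padic_cyl_rects p)"
proof -
  let ?C = "range (\<lambda>(n, r). padic_cyl p n r)"
  have C_space: "padic p \<in> ?C" using padic_cyl_level_zero[of p] by (metis case_prod_conv rangeI)
  have C_Pow: "?C \<subseteq> Pow (padic p)" using padic_cyl_subset by auto
  have "sets (padic_borel p \<Otimes>\<^sub>M padic_borel p) =
      sets (sigma (space (padic_borel p) \<times> space (padic_borel p)) {a \<times> b | a b. a \<in> ?C \<and> b \<in> ?C})"
    by (rule sets_pair_eq[of ?C _ "{padic p}" ?C _ "{padic p}"])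
      (simp_all add: C_space C_Pow sets_padic_borel_cyl)
  then have "sets (padic_borel p \<Otimes>\<^sub>M padic_borel p) =
      sets (sigma (padic p \<times> padic p) {a \<times> b | a b. a \<in> ?C \<and> b \<in> ?C})"
    by simp
  also have "\<dots> = sigma_sets (padic p \<times> padic p) {a \<times> b | a b. a \<in> ?C \<and> b \<in> ?C}"
    using padic_cyl_subset by (intro sets_measure_of) blast
  also have "\<dots> = sigma_sets (padic p \<times> padic p) (padic_cyl_rects p)"
  proof (rule sigma_sets_eqI)
    fix R assume "R \<in> {a \<times> b | a b. a \<in> ?C \<and> b \<in> ?C}"
    then show "R \<in> sigma_sets (padic p \<times> padic p) (padic_cyl_rects p)"
      using padic_cyl_Times_in_sigma_rects by auto
  next
    fix R assume "R \<in> padic_cyl_rects p"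
    then show "R \<in> sigma_sets (padic p \<times> padic p) {a \<times> b | a b. a \<in> ?C \<and> b \<in> ?C}"
      by (auto simp: padic_cyl_rects_def intro!: sigma_sets.Basic)
  qed
  finally show ?thesis .
qed

lemma measure_eq_padic_cyl_rectsI:
  assumes "finite_measure N" "sets N = sets (padic_borel p \<Otimes>\<^sub>M padic_borel p)"
    and "sets N' = sets (padic_borel p \<Otimes>\<^sub>M padic_borel p)"
    and "\<And>n r s. emeasure N (padic_cyl p n r \<times> padic_cyl p n s) =
                 emeasure N' (padic_cyl p n r \<times> padic_cyl p n s)"
  shows "N = N'"
proof (rule measure_eqI_generator_eq[OF Int_stable_padic_cyl_rects])
  show "padic_cyl_rects p \<subseteq> Pow (padic p \<times> padic p)"
    using padic_cyl_subset by (auto simp: padic_cyl_rects_def)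
  show "sets N = sigma_sets (padic p \<times> padic p) (padic_cyl_rects p)"
    "sets N' = sigma_sets (padic p \<times> padic p) (padic_cyl_rects p)"
    using assms(2,3) by (simp_all add: sets_pair_padic_borel)
  show "\<And>X. X \<in> padic_cyl_rects p \<Longrightarrow> emeasure N X = emeasure N' X"
    using assms(4) by (auto simp: padic_cyl_rects_def)
  show "range (\<lambda>_. padic_cyl p 0 0 \<times> padic_cyl p 0 0) \<subseteq> padic_cyl_rects p"
    by (auto simp: padic_cyl_rects_def)
  show "(\<Union>_. padic_cyl p 0 0 \<times> padic_cyl p 0 0) = padic p \<times> padic p"
    by (simp add: padic_cyl_level_zero)
  show "\<And>_. emeasure N (padic_cyl p 0 0 \<times> padic_cyl p 0 0) \<noteq> \<infinity>"
    using finite_measure.emeasure_finite[OF assms(1)] by simp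
qed

end

(* Digits are reduced mod p, so that every digit sequence (not only almost every one) yields a
   p-adic integer. *)
definition padic_of_digits :: "nat \<Rightarrow> (nat \<Rightarrow> int) \<Rightarrow> nat \<Rightarrow> int" where
  "padic_of_digits p \<omega> n = (\<Sum>i<n. (\<omega> i mod int p) * int p ^ i)"

lemma padic_of_digits_Suc:
  "padic_of_digits p \<omega> (Suc n) = padic_of_digits p \<omega> n + (\<omega> n mod int p) * int p ^ n"
  by (simp add: padic_of_digits_def)

definition padic_digit_space :: "nat \<Rightarrow> (nat \<Rightarrow> int) measure" where
  "padic_digit_space p = PiM UNIV (\<lambda>_. measure_pmf (pmf_of_set {0..<int p}))"

definition padic_haar_measure :: "nat \<Rightarrow> (nat \<Rightarrow> int) measure" where
  "padic_haar_measure p = distr (padic_digit_space p) (padic_borel p) (padic_of_digits p)"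

lemma sets_padic_haar_measure [simp]: "sets (padic_haar_measure p) = sets (padic_borel p)"
  by (simp add: padic_haar_measure_def)

lemma space_padic_haar_measure [simp]: "space (padic_haar_measure p) = padic p"
  by (simp add: padic_haar_measure_def)

lemma measurable_padic_of_digits_level:
  "(\<lambda>\<omega>. padic_of_digits p \<omega> n) \<in> padic_digit_space p \<rightarrow>\<^sub>M count_space UNIV"
proof -
  have digit: "(\<lambda>\<omega>. \<omega> i) \<in> padic_digit_space p \<rightarrow>\<^sub>M count_space UNIV" for i
  proof -
    have "(\<lambda>\<omega>. \<omega> i) \<in> padic_digit_space p \<rightarrow>\<^sub>M measure_pmf (pmf_of_set {0..<int p})"
      unfolding padic_digit_space_def by (rule measurable_component_singleton) simp
    then show ?thesis
      by (subst measurable_cong_sets[OF refl, where N' = "measure_pmf (pmf_of_set {0..<int p})"]) simp_all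
  qed
  show ?thesis
  proof (induction n)
    case (Suc n)
    show ?case
      using measurable_count_space_apply2[OF Suc.IH digit[of n],
          of "\<lambda>s d. s + d mod int p * int p ^ n"]
      by (simp add: padic_of_digits_Suc)
  qed (simp add: padic_of_digits_def)
qed

context
  fixes p :: nat
  assumes p_pos: "0 < p"
begin

lemma padic_of_digits_range: "0 \<le> padic_of_digits p \<omega> n \<and> padic_of_digits p \<omega> n < int p ^ n"
proof (induction n)
  case (Suc n)
  have "(\<omega> n mod int p) * int p ^ n \<le> (int p - 1) * int p ^ n"
    using p_pos by (intro mult_right_mono) auto
  then show ?case using Suc p_pos by (auto simp: padic_of_digits_Suc algebra_simps)
qed (simp add: padic_of_digits_def)

lemma padic_of_digits_in_padic: "padic_of_digits p \<omega> \<in> padic p"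
  using padic_of_digits_range by (simp add: padic_def padic_of_digits_Suc)

lemma padic_of_digits_eq_iff:
  "0 \<le> r \<Longrightarrow> r < int p ^ n \<Longrightarrow>
    padic_of_digits p \<omega> n = r \<longleftrightarrow> (\<forall>i<n. \<omega> i mod int p = r div int p ^ i mod int p)"
proof (induction n arbitrary: r)
  case (Suc n)
  let ?q = "int p ^ n"
  have q: "0 < ?q" using p_pos by simp
  have "?q * (r div ?q) \<le> r"
    using mult_div_mod_eq[of ?q r] pos_mod_sign[OF q, of r] by linarith
  also have "r < ?q * int p" using Suc.prems by (simp add: mult.commute)
  finally have r_div: "0 \<le> r div ?q" "r div ?q < int p"
    using Suc.prems q by (simp_all add: pos_imp_zdiv_nonneg_iff mult_less_cancel_left_pos)
  have "padic_of_digits p \<omega> (Suc n) = r \<longleftrightarrow>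
      padic_of_digits p \<omega> n = r mod ?q \<and> \<omega> n mod int p = r div ?q"
  proof
    assume "padic_of_digits p \<omega> (Suc n) = r"
    then have "r = \<omega> n mod int p * ?q + padic_of_digits p \<omega> n"
      by (simp add: padic_of_digits_Suc)
    then show "padic_of_digits p \<omega> n = r mod ?q \<and> \<omega> n mod int p = r div ?q"
      using padic_of_digits_range[of \<omega> n] q by simp
  qed (simp add: padic_of_digits_Suc mult.commute)
  also have "\<dots> \<longleftrightarrow> (\<forall>i<n. \<omega> i mod int p = r mod ?q div int p ^ i mod int p) \<and> \<omega> n mod int p = r div ?q"
    using Suc.IH[of "r mod ?q"] q by simp
  also have "\<dots> \<longleftrightarrow> (\<forall>i<n. \<omega> i mod int p = r div int p ^ i mod int p) \<and> \<omega> n mod int p = r div ?q mod int p"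
    using mod_power_div_power_mod[of _ n "int p" r] p_pos r_div by simp
  also have "\<dots> \<longleftrightarrow> (\<forall>i<Suc n. \<omega> i mod int p = r div int p ^ i mod int p)"
    by (auto simp: less_Suc_eq)
  finally show ?case .
qed (simp add: padic_of_digits_def)

lemma measurable_padic_of_digits: "padic_of_digits p \<in> padic_digit_space p \<rightarrow>\<^sub>M padic_borel p"
  by (intro measurable_padic_borelI[OF p_pos] measurable_padic_of_digits_level)
    (simp add: padic_of_digits_in_padic)

lemma emeasure_padic_haar_measure_cyl:
  assumes r: "0 \<le> r" "r < int p ^ n"
  shows "emeasure (padic_haar_measure p) (padic_cyl p n r) = ennreal (1 / real p ^ n)"
proof -
  let ?U = "\<lambda>_::nat. measure_pmf (pmf_of_set {0..<int p})"
  let ?D = "\<lambda>i. {d::int. d mod int p = r div int p ^ i mod int p}"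
  have "padic_of_digits p -` padic_cyl p n r \<inter> space (padic_digit_space p)
      = prod_emb UNIV ?U {..<n} (Pi\<^sub>E {..<n} ?D)"
    using padic_of_digits_eq_iff[OF r] padic_of_digits_in_padic
    by (auto simp: padic_digit_space_def padic_cyl_def prod_emb_def space_PiM PiE_def Pi_def)
  then have "emeasure (padic_haar_measure p) (padic_cyl p n r) = (\<Prod>i<n. emeasure (?U i) (?D i))"
    unfolding padic_haar_measure_def
    by (simp add: emeasure_distr[OF measurable_padic_of_digits padic_cyl_in_sets[OF p_pos]])
      (simp add: padic_digit_space_def emeasure_PiM_emb prob_space_measure_pmf)
  also have "\<dots> = (\<Prod>i<n. ennreal (1 / real p))"
  proof (rule prod.cong[OF refl])
    fix i
    have "{0..<int p} \<inter> ?D i = {r div int p ^ i mod int p}" using p_pos by auto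
    then show "emeasure (?U i) (?D i) = ennreal (1 / real p)"
      using p_pos by (simp add: emeasure_pmf_of_set divide_ennreal ennreal_of_nat_eq_real_of_nat)
  qed
  also have "\<dots> = ennreal (1 / real p ^ n)"
    using ennreal_power[of "1 / real p" n] by (simp add: power_one_over)
  finally show ?thesis .
qed

end

definition padic_lin :: "nat \<Rightarrow> int \<Rightarrow> int \<Rightarrow> (nat \<Rightarrow> int) \<Rightarrow> (nat \<Rightarrow> int) \<Rightarrow> nat \<Rightarrow> int" where
  "padic_lin p a b x y = (\<lambda>n. (a * x n + b * y n) mod int p ^ n)"

definition padic_lin2 ::
  "nat \<Rightarrow> int \<Rightarrow> int \<Rightarrow> int \<Rightarrow> int \<Rightarrow> (nat \<Rightarrow> int) \<times> (nat \<Rightarrow> int) \<Rightarrow> (nat \<Rightarrow> int) \<times> (nat \<Rightarrow> int)"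
where
  "padic_lin2 p a b c d = (\<lambda>(x, y). (padic_lin p a b x y, padic_lin p c d x y))"

lemma padic_add_eq_lin: "padic_add p x y = padic_lin p 1 1 x y"
  by (simp add: padic_add_def padic_lin_def)

lemma padic_add_smul_neg_eq_lin:
  "padic_add p (padic_smul p c x) (padic_neg p y) = padic_lin p c (-1) x y"
  unfolding padic_add_def padic_smul_def padic_neg_def padic_lin_def
  by (rule ext, subst mod_add_eq) simp

lemma padic_add_smul_eq_lin: "padic_add p x (padic_smul p c y) = padic_lin p 1 c x y"
  unfolding padic_add_def padic_smul_def padic_lin_def
  by (rule ext, subst mod_add_right_eq) simp

lemma padic_neg_lin: "padic_neg p (padic_lin p a b x y) = padic_lin p (- a) (- b) x y"
  unfolding padic_neg_def padic_lin_def
  by (rule ext, subst mod_minus_eq) (simp add: algebra_simps)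

lemma padic_lin_in_padic:
  assumes "x \<in> padic p" "y \<in> padic p" "0 < p"
  shows "padic_lin p a b x y \<in> padic p"
proof -
  have "(a * x (Suc n) + b * y (Suc n)) mod int p ^ Suc n mod int p ^ n = (a * x n + b * y n) mod int p ^ n" for n
  proof -
    have "(a * x (Suc n) + b * y (Suc n)) mod int p ^ Suc n mod int p ^ n
        = (a * x (Suc n) + b * y (Suc n)) mod int p ^ n"
      by (simp add: mod_mod_cancel le_imp_power_dvd)
    also have "\<dots> = (a * (x (Suc n) mod int p ^ n) + b * (y (Suc n) mod int p ^ n)) mod int p ^ n"
      by (rule mod_add_cong) (simp_all add: mod_mult_right_eq)
    also have "\<dots> = (a * x n + b * y n) mod int p ^ n"
      using assms(1,2) by (simp add: padic_def)
    finally show ?thesis .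
  qed
  then show ?thesis using assms(3) by (simp add: padic_def padic_lin_def)
qed

lemma measurable_padic_lin:
  assumes "0 < p" "f \<in> M \<rightarrow>\<^sub>M padic_borel p" "g \<in> M \<rightarrow>\<^sub>M padic_borel p"
  shows "(\<lambda>\<omega>. padic_lin p a b (f \<omega>) (g \<omega>)) \<in> M \<rightarrow>\<^sub>M padic_borel p"
proof (rule measurable_padic_borelI[OF assms(1)])
  show "(\<lambda>\<omega>. padic_lin p a b (f \<omega>) (g \<omega>)) \<in> space M \<rightarrow> padic p"
    using measurable_space[OF assms(2)] measurable_space[OF assms(3)] padic_lin_in_padic assms(1)
    by auto
  fix n
  have level: "(\<lambda>\<omega>. h \<omega> n) \<in> M \<rightarrow>\<^sub>M count_space UNIV" if "h \<in> M \<rightarrow>\<^sub>M padic_borel p" for h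
    using measurable_compose[OF that measurable_padic_level[OF assms(1)]] .
  show "(\<lambda>\<omega>. padic_lin p a b (f \<omega>) (g \<omega>) n) \<in> M \<rightarrow>\<^sub>M count_space UNIV"
    using measurable_count_space_apply2[OF level[OF assms(2)] level[OF assms(3)],
        of "\<lambda>u v. (a * u + b * v) mod int p ^ n"]
    by (simp add: padic_lin_def)
qed

lemma measurable_padic_lin2:
  assumes "0 < p" "sets M = sets (padic_borel p)"
  shows "padic_lin2 p a b c d \<in> M \<Otimes>\<^sub>M M \<rightarrow>\<^sub>M padic_borel p \<Otimes>\<^sub>M padic_borel p"
proof -
  have "fst \<in> M \<Otimes>\<^sub>M M \<rightarrow>\<^sub>M padic_borel p" "snd \<in> M \<Otimes>\<^sub>M M \<rightarrow>\<^sub>M padic_borel p"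
    using assms(2) by (simp_all cong: measurable_cong_sets)
  then show ?thesis
    unfolding padic_lin2_def case_prod_beta
    by (intro measurable_Pair measurable_padic_lin[OF assms(1)])
qed

lemma vimage_padic_lin2_cyl_Times:
  assumes p: "0 < p" and det: "coprime (a * d - b * c) (int p)"
    and x0: "0 \<le> x0" "x0 < int p ^ n" and y0: "0 \<le> y0" "y0 < int p ^ n"
    and r: "(a * x0 + b * y0) mod int p ^ n = r" and s: "(c * x0 + d * y0) mod int p ^ n = s"
  shows "padic_lin2 p a b c d -` (padic_cyl p n r \<times> padic_cyl p n s) \<inter> padic p \<times> padic p
    = padic_cyl p n x0 \<times> padic_cyl p n y0"
proof -
  let ?f = "\<lambda>(x, y). ((a * x + b * y) mod int p ^ n, (c * x + d * y) mod int p ^ n)"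
  have "inj_on ?f ({0..<int p ^ n} \<times> {0..<int p ^ n})"
    using bij_betw_linear_residues[of "int p ^ n" a d b c] p det
    by (simp add: bij_betw_def)
  then have "?f (x n, y n) = ?f (x0, y0) \<longleftrightarrow> (x n, y n) = (x0, y0)"
    if "x \<in> padic p" "y \<in> padic p" for x y
    using padic_range[OF that(1), of n] padic_range[OF that(2), of n] x0 y0
    by (intro inj_on_eq_iff) auto
  then show ?thesis
    using padic_lin_in_padic[OF _ _ p] r s
    by (auto simp: padic_lin2_def padic_lin_def padic_cyl_def)
qed

lemma emeasure_distr_padic_lin2_cyl_Times:
  assumes p: "0 < p" and det: "coprime (a * d - b * c) (int p)"
    and M: "prob_space M" "sets M = sets (padic_borel p)"
    and r: "0 \<le> r" "r < int p ^ n" and s: "0 \<le> s" "s < int p ^ n"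
  obtains x0 y0 where "0 \<le> x0" "x0 < int p ^ n" "0 \<le> y0" "y0 < int p ^ n"
    "(a * x0 + b * y0) mod int p ^ n = r" "(c * x0 + d * y0) mod int p ^ n = s"
    "emeasure (distr (M \<Otimes>\<^sub>M M) (padic_borel p \<Otimes>\<^sub>M padic_borel p) (padic_lin2 p a b c d))
        (padic_cyl p n r \<times> padic_cyl p n s) = emeasure M (padic_cyl p n x0) * emeasure M (padic_cyl p n y0)"
proof -
  interpret M: prob_space M by (rule M(1))
  have "coprime (a * d - b * c) (int p ^ n)" using det by simp
  then have "(r, s) \<in> (\<lambda>(x, y). ((a * x + b * y) mod int p ^ n, (c * x + d * y) mod int p ^ n))
      ` ({0..<int p ^ n} \<times> {0..<int p ^ n})"
    using bij_betw_linear_residues[of "int p ^ n" a d b c] p r s by (simp add: bij_betw_def)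
  then obtain x0 y0 where x0: "0 \<le> x0" "x0 < int p ^ n" and y0: "0 \<le> y0" "y0 < int p ^ n"
    and eqs: "(a * x0 + b * y0) mod int p ^ n = r" "(c * x0 + d * y0) mod int p ^ n = s"
    by auto
  have space: "space (M \<Otimes>\<^sub>M M) = padic p \<times> padic p"
    using sets_eq_imp_space_eq[OF M(2)] by (simp add: space_pair_measure)
  have "padic_cyl p n r \<times> padic_cyl p n s \<in> sets (padic_borel p \<Otimes>\<^sub>M padic_borel p)"
    using p by (simp add: padic_cyl_in_sets)
  then have "emeasure (distr (M \<Otimes>\<^sub>M M) (padic_borel p \<Otimes>\<^sub>M padic_borel p) (padic_lin2 p a b c d))
        (padic_cyl p n r \<times> padic_cyl p n s) = emeasure (M \<Otimes>\<^sub>M M) (padic_cyl p n x0 \<times> padic_cyl p n y0)"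
    using measurable_padic_lin2[OF p M(2)] vimage_padic_lin2_cyl_Times[OF p det x0 y0 eqs]
    by (simp add: emeasure_distr space)
  also have "\<dots> = emeasure M (padic_cyl p n x0) * emeasure M (padic_cyl p n y0)"
    using p M(2) by (simp add: M.emeasure_pair_measure_Times padic_cyl_in_sets)
  finally show ?thesis using that x0 y0 eqs by blast
qed

lemma vimage_padic_add_cyl:
  assumes "k \<in> padic p" "0 \<le> r" "r < int p ^ n" "0 < p"
  shows "padic_add p k -` padic_cyl p n r \<inter> padic p = padic_cyl p n ((r - k n) mod int p ^ n)"
proof -
  have "(k n + x n) mod int p ^ n = r \<longleftrightarrow> x n = (r - k n) mod int p ^ n" if "x \<in> padic p" for x
  proof -
    have "(k n + x n) mod int p ^ n = r \<longleftrightarrow> (k n + x n) mod int p ^ n = r mod int p ^ n"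
      using assms(2,3) by simp
    also have "\<dots> \<longleftrightarrow> x n mod int p ^ n = (r - k n) mod int p ^ n"
      by (simp add: mod_eq_dvd_iff algebra_simps)
    finally show ?thesis using padic_range[OF that, of n] by simp
  qed
  moreover have "(\<lambda>m. (k m + x m) mod int p ^ m) \<in> padic p" if "x \<in> padic p" for x
    using padic_lin_in_padic[OF assms(1) that assms(4), of 1 1] by (simp add: padic_lin_def)
  ultimately show ?thesis
    using assms padic_range[of k p n] by (auto simp: padic_cyl_def padic_add_def)
qed

lemma measurable_padic_add:
  "0 < p \<Longrightarrow> k \<in> padic p \<Longrightarrow> padic_add p k \<in> padic_borel p \<rightarrow>\<^sub>M padic_borel p"
  using measurable_padic_lin[where f = "\<lambda>_. k" and g = id and a = 1 and b = 1]
  by (simp add: padic_add_eq_lin[abs_def])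

lemma distr_padic_add_translate_invariant:
  assumes p: "0 < p" and sets: "sets \<nu> = sets (padic_borel p)"
    and a: "a \<in> padic p" and k: "k \<in> padic p"
    and inv: "distr \<nu> (padic_borel p) (padic_add p k) = \<nu>"
  shows "distr (distr \<nu> (padic_borel p) (padic_add p a)) (padic_borel p) (padic_add p k)
    = distr \<nu> (padic_borel p) (padic_add p a)"
proof -
  have add: "padic_add p c \<in> \<nu> \<rightarrow>\<^sub>M padic_borel p" if "c \<in> padic p" for c
    using measurable_padic_add[OF p that] sets by (simp cong: measurable_cong_sets)
  have "padic_add p k \<circ> padic_add p a = padic_add p a \<circ> padic_add p k"
    by (rule ext) (simp add: padic_add_def mod_add_right_eq add.left_commute)
  then show ?thesis
    using distr_distr[OF measurable_padic_add[OF p k] add[OF a]]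
      distr_distr[OF measurable_padic_add[OF p a] add[OF k]] inv
    by simp
qed

definition coset_weight :: "nat \<Rightarrow> int \<Rightarrow> real" where
  "coset_weight p r = (if int p dvd r then real p / 4 else 3 * real p / (4 * (real p - 1)))"

(* x 1 is the residue of x modulo p, so the density is constant on the cosets of p Delta_p. *)
definition coset_weighted_haar :: "nat \<Rightarrow> (nat \<Rightarrow> int) measure" where
  "coset_weighted_haar p = density (padic_haar_measure p) (\<lambda>x. ennreal (coset_weight p (x 1)))"

lemma sets_coset_weighted_haar [simp]: "sets (coset_weighted_haar p) = sets (padic_borel p)"
  by (simp add: coset_weighted_haar_def)

lemma space_coset_weighted_haar [simp]: "space (coset_weighted_haar p) = padic p"
  by (simp add: coset_weighted_haar_def)

lemma coset_weight_mod: "coset_weight p (r mod int p) = coset_weight p r"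
  by (simp add: coset_weight_def dvd_mod_iff)

context
  fixes p :: nat
  assumes p_gt_1: "1 < p"
begin

lemma emeasure_coset_weighted_haar_cyl:
  assumes n: "1 \<le> n" and r: "0 \<le> r" "r < int p ^ n"
  shows "emeasure (coset_weighted_haar p) (padic_cyl p n r) = ennreal (coset_weight p r / real p ^ n)"
proof -
  have p: "0 < p" using p_gt_1 by simp
  have "(\<lambda>x. ennreal (coset_weight p (x 1))) \<in> borel_measurable (padic_haar_measure p)"
    using measurable_padic_level[OF p, of 1] by (simp cong: measurable_cong_sets)
  then have "emeasure (coset_weighted_haar p) (padic_cyl p n r)
      = (\<integral>\<^sup>+ x. ennreal (coset_weight p (x 1)) * indicator (padic_cyl p n r) x \<partial>padic_haar_measure p)"
    unfolding coset_weighted_haar_def by (simp add: emeasure_density padic_cyl_in_sets[OF p])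
  also have "\<dots> = (\<integral>\<^sup>+ x. ennreal (coset_weight p r) * indicator (padic_cyl p n r) x \<partial>padic_haar_measure p)"
  proof (intro nn_integral_cong)
    fix x
    have "coset_weight p (x 1) = coset_weight p r" if "x \<in> padic_cyl p n r"
      using that padic_mod_power[of x p 1 n] n coset_weight_mod[of p r] by (auto simp: padic_cyl_def)
    then show "ennreal (coset_weight p (x 1)) * indicator (padic_cyl p n r) x =
        ennreal (coset_weight p r) * indicator (padic_cyl p n r) x"
      by (simp split: split_indicator)
  qed
  also have "\<dots> = ennreal (coset_weight p r) * ennreal (1 / real p ^ n)"
    by (simp add: nn_integral_cmult_indicator padic_cyl_in_sets[OF p]
        emeasure_padic_haar_measure_cyl[OF p r])
  also have "\<dots> = ennreal (coset_weight p r / real p ^ n)"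
    using p_gt_1 by (simp add: coset_weight_def ennreal_mult[symmetric])
  finally show ?thesis .
qed

lemma emeasure_coset_weighted_haar_cyl_1:
  assumes "0 \<le> r" "r < int p"
  shows "emeasure (coset_weighted_haar p) (padic_cyl p 1 r) =
    ennreal (if r = 0 then 1 / 4 else 3 / (4 * (real p - 1)))"
proof -
  have "int p dvd r \<longleftrightarrow> r = 0" using assms zdvd_imp_le by fastforce
  then show ?thesis
    using emeasure_coset_weighted_haar_cyl[of 1 r] assms p_gt_1 by (simp add: coset_weight_def)
qed

lemma emeasure_coset_weighted_haar_cyl_1_less_1:
  assumes "0 \<le> r" "r < int p"
  shows "emeasure (coset_weighted_haar p) (padic_cyl p 1 r) < 1"
proof -
  have "3 / (4 * (real p - 1)) < 1" using p_gt_1 by (simp add: field_simps)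
  then show ?thesis
    using emeasure_coset_weighted_haar_cyl_1[OF assms] by simp
qed

lemma prob_space_coset_weighted_haar: "prob_space (coset_weighted_haar p)"
proof (rule prob_spaceI)
  let ?\<mu> = "coset_weighted_haar p"
  have p: "0 < p" using p_gt_1 by simp
  have partition: "padic p = (\<Union>r\<in>{0..<int p}. padic_cyl p 1 r)"
    using padic_range[of _ p 1] by (auto simp: padic_cyl_def)
  have "emeasure ?\<mu> (padic p) = (\<Sum>r\<in>{0..<int p}. emeasure ?\<mu> (padic_cyl p 1 r))"
    unfolding partition
    by (rule sum_emeasure[symmetric])
      (auto simp: padic_cyl_in_sets[OF p] disjoint_family_on_def, auto simp: padic_cyl_def)
  also have "\<dots> = (\<Sum>r\<in>{0..<int p}. ennreal (if r = 0 then 1 / 4 else 3 / (4 * (real p - 1))))"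
    by (intro sum.cong refl) (simp only: atLeastLessThan_iff emeasure_coset_weighted_haar_cyl_1)
  also have "\<dots> = ennreal (\<Sum>r\<in>{0..<int p}. if r = 0 then 1 / 4 else 3 / (4 * (real p - 1)))"
    using p_gt_1 by (subst sum_ennreal) auto
  also have "(\<Sum>r\<in>{0..<int p}. if r = 0 then 1 / 4 else 3 / (4 * (real p - 1))) = (1::real)"
  proof -
    have "{0..<int p} = insert 0 {1..<int p}" using p by auto
    then have "(\<Sum>r\<in>{0..<int p}. if r = 0 then 1 / 4 else 3 / (4 * (real p - 1)))
        = 1 / 4 + (\<Sum>r\<in>{1..<int p}. 3 / (4 * (real p - 1)) :: real)"
      by simp
    also have "\<dots> = 1" using p_gt_1 by (simp add: of_nat_diff field_simps)
    finally show ?thesis .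
  qed
  finally show "emeasure ?\<mu> (space ?\<mu>) = 1" by simp
qed

end

lemma coset_weighted_haar_not_translate_invariant:
  assumes prime: "prime p" and k: "k \<in> padic p" "k 1 \<noteq> 0"
  shows "distr (coset_weighted_haar p) (padic_borel p) (padic_add p k) \<noteq> coset_weighted_haar p"
proof
  let ?\<mu> = "coset_weighted_haar p"
  have p: "1 < p" using prime prime_gt_1_nat by blast
  define t where "t = - k 1 mod int p"
  have "0 < k 1" "k 1 < int p" using padic_range[OF k(1), of 1] k(2) by auto
  then have t: "0 < t" "t < int p"
    using p by (auto simp: t_def zmod_zminus1_eq_if)
  have add_k: "padic_add p k \<in> ?\<mu> \<rightarrow>\<^sub>M padic_borel p"
    using measurable_padic_add[of p k] p k(1) by (simp cong: measurable_cong_sets)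
  assume "distr ?\<mu> (padic_borel p) (padic_add p k) = ?\<mu>"
  then have "emeasure ?\<mu> (padic_cyl p 1 0) = emeasure (distr ?\<mu> (padic_borel p) (padic_add p k)) (padic_cyl p 1 0)"
    by simp
  also have "\<dots> = emeasure ?\<mu> (padic_add p k -` padic_cyl p 1 0 \<inter> padic p)"
    using emeasure_distr[OF add_k padic_cyl_in_sets, of 1 0] p by simp
  also have "\<dots> = emeasure ?\<mu> (padic_cyl p 1 t)"
    using vimage_padic_add_cyl[OF k(1), of 0 1] p by (simp add: t_def)
  finally have "ennreal (1 / 4) = ennreal (3 / (4 * (real p - 1)))"
    using emeasure_coset_weighted_haar_cyl_1[OF p, of 0] emeasure_coset_weighted_haar_cyl_1[OF p, of t] t
    by simp
  then have "real p = 4"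
    using p by (simp add: field_simps)
  then show False
    using prime prime_product[of 2 2] by simp
qed

lemma not_padic_I_coset_weighted_haar:
  assumes prime: "prime p"
  shows "\<not> padic_I p (coset_weighted_haar p)"
proof
  let ?\<mu> = "coset_weighted_haar p" and ?P = "padic_borel p"
  have p: "1 < p" using prime prime_gt_1_nat by blast
  assume "padic_I p ?\<mu>"
  then obtain K \<nu> a where K: "padic_compact_subgroup p K" and haar: "padic_haar p K \<nu>"
    and a: "a \<in> padic p" and \<mu>: "?\<mu> = distr \<nu> ?P (padic_add p a)"
    by (auto simp: padic_I_def)
  have K_sub: "K \<subseteq> padic p" using K by (simp add: padic_compact_subgroup_def)
  have sets_\<nu>: "sets \<nu> = sets ?P" and K_\<nu>: "K \<in> sets \<nu>" "emeasure \<nu> K = 1"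
    and inv: "\<And>k. k \<in> K \<Longrightarrow> distr \<nu> ?P (padic_add p k) = \<nu>"
    using haar by (auto simp: padic_haar_def)
  show False
  proof (cases "\<exists>k\<in>K. k 1 \<noteq> 0")
    case True
    then obtain k where k: "k \<in> K" "k 1 \<noteq> 0" by blast
    then have "distr ?\<mu> ?P (padic_add p k) = ?\<mu>"
      unfolding \<mu> using K_sub p a sets_\<nu> inv[OF k(1)]
      by (intro distr_padic_add_translate_invariant) auto
    then show False
      using coset_weighted_haar_not_translate_invariant[OF prime] k K_sub by auto
  next
    case False
    have add_a: "padic_add p a \<in> \<nu> \<rightarrow>\<^sub>M ?P"
      using measurable_padic_add[of p a] p a sets_\<nu> by (simp cong: measurable_cong_sets)
    have "K \<subseteq> padic_add p a -` padic_cyl p 1 (a 1) \<inter> space \<nu>"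
    proof
      fix k assume "k \<in> K"
      then have "k \<in> padic p" "k 1 = 0" using K_sub False by auto
      then show "k \<in> padic_add p a -` padic_cyl p 1 (a 1) \<inter> space \<nu>"
        using measurable_space[OF add_a] padic_range[OF a, of 1] sets_eq_imp_space_eq[OF sets_\<nu>]
        by (auto simp: padic_cyl_def padic_add_def)
    qed
    then have "emeasure \<nu> K \<le> emeasure \<nu> (padic_add p a -` padic_cyl p 1 (a 1) \<inter> space \<nu>)"
      using add_a p by (intro emeasure_mono) auto
    also have "\<dots> = emeasure ?\<mu> (padic_cyl p 1 (a 1))"
      unfolding \<mu> using add_a p by (simp add: emeasure_distr)
    also have "\<dots> < 1"
      using padic_range[OF a, of 1] p by (intro emeasure_coset_weighted_haar_cyl_1_less_1) auto
    finally show False using K_\<nu>(2) by simp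
  qed
qed

(* The hypotheses on the coefficients say that the matrix is anti-diagonal modulo p, so the coset
   of p Delta_p containing each coordinate of the preimage is determined by the other target
   coordinate. *)
lemma emeasure_distr_coset_weighted_haar_lin2_cyl_Times:
  assumes p: "1 < p" and det: "coprime (a * d - b * c) (int p)"
    and antidiag: "\<And>x y. int p dvd a * x + b * y \<longleftrightarrow> int p dvd y"
      "\<And>x y. int p dvd c * x + d * y \<longleftrightarrow> int p dvd x"
    and n: "1 \<le> n" and r: "0 \<le> r" "r < int p ^ n" and s: "0 \<le> s" "s < int p ^ n"
  shows "emeasure (distr (coset_weighted_haar p \<Otimes>\<^sub>M coset_weighted_haar p)
      (padic_borel p \<Otimes>\<^sub>M padic_borel p) (padic_lin2 p a b c d)) (padic_cyl p n r \<times> padic_cyl p n s)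
    = ennreal (coset_weight p s / real p ^ n) * ennreal (coset_weight p r / real p ^ n)"
proof -
  have p0: "0 < p" using p by simp
  have dvd_mod: "int p dvd z mod int p ^ n \<longleftrightarrow> int p dvd z" for z
    using n by (simp add: dvd_mod_iff dvd_power)
  obtain x0 y0 where x0: "0 \<le> x0" "x0 < int p ^ n" and y0: "0 \<le> y0" "y0 < int p ^ n"
    and eqs: "(a * x0 + b * y0) mod int p ^ n = r" "(c * x0 + d * y0) mod int p ^ n = s"
    and emeasure: "emeasure (distr (coset_weighted_haar p \<Otimes>\<^sub>M coset_weighted_haar p)
      (padic_borel p \<Otimes>\<^sub>M padic_borel p) (padic_lin2 p a b c d)) (padic_cyl p n r \<times> padic_cyl p n s)
      = emeasure (coset_weighted_haar p) (padic_cyl p n x0) * emeasure (coset_weighted_haar p) (padic_cyl p n y0)"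
    using emeasure_distr_padic_lin2_cyl_Times[OF p0 det prob_space_coset_weighted_haar[OF p]
        sets_coset_weighted_haar r s] by blast
  have "int p dvd x0 \<longleftrightarrow> int p dvd s" "int p dvd y0 \<longleftrightarrow> int p dvd r"
    using dvd_mod[of "c * x0 + d * y0"] antidiag(2)[of x0 y0]
      dvd_mod[of "a * x0 + b * y0"] antidiag(1)[of x0 y0] eqs
    by simp_all
  then have "coset_weight p x0 = coset_weight p s" "coset_weight p y0 = coset_weight p r"
    by (simp_all add: coset_weight_def)
  then show ?thesis
    using emeasure x0 y0 by (simp add: emeasure_coset_weighted_haar_cyl[OF p n])
qed

(* The two maps send (xi1, xi2) to (L1, L2) and to (L1, -L2). *)
lemma emeasure_distr_coset_weighted_haar_L1_L2_cyl_Times: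
  assumes p: "1 < p" and n: "1 \<le> n" and r: "0 \<le> r" "r < int p ^ n" and s: "0 \<le> s" "s < int p ^ n"
  shows "emeasure (distr (coset_weighted_haar p \<Otimes>\<^sub>M coset_weighted_haar p) (padic_borel p \<Otimes>\<^sub>M padic_borel p)
      (padic_lin2 p (int p) (-1) 1 (int p))) (padic_cyl p n r \<times> padic_cyl p n s)
    = ennreal (coset_weight p s / real p ^ n) * ennreal (coset_weight p r / real p ^ n)"
    and "emeasure (distr (coset_weighted_haar p \<Otimes>\<^sub>M coset_weighted_haar p) (padic_borel p \<Otimes>\<^sub>M padic_borel p)
      (padic_lin2 p (int p) (-1) (-1) (- int p))) (padic_cyl p n r \<times> padic_cyl p n s)
    = ennreal (coset_weight p s / real p ^ n) * ennreal (coset_weight p r / real p ^ n)"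
proof -
  have "coprime (int p * int p + 1) (int p * int p)"
    by (rule coprime_add_one_left)
  then have coprime: "coprime (int p * int p + 1) (int p)" "coprime (- (int p * int p) - 1) (int p)"
    using coprime_minus_left_iff[of "int p * int p + 1" "int p"] by simp_all
  have first_row: "int p dvd int p * x + - 1 * y \<longleftrightarrow> int p dvd y" for x y
    using zdvd_reduce[of "int p" "- y" x] by (simp add: add.commute)
  show "emeasure (distr (coset_weighted_haar p \<Otimes>\<^sub>M coset_weighted_haar p) (padic_borel p \<Otimes>\<^sub>M padic_borel p)
      (padic_lin2 p (int p) (-1) 1 (int p))) (padic_cyl p n r \<times> padic_cyl p n s)
    = ennreal (coset_weight p s / real p ^ n) * ennreal (coset_weight p r / real p ^ n)"
  proof (rule emeasure_distr_coset_weighted_haar_lin2_cyl_Times[OF p _ first_row _ n r s])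
    show "int p dvd 1 * x + int p * y \<longleftrightarrow> int p dvd x" for x y
      by (simp add: zdvd_reduce)
  qed (use coprime(1) in simp)
  show "emeasure (distr (coset_weighted_haar p \<Otimes>\<^sub>M coset_weighted_haar p) (padic_borel p \<Otimes>\<^sub>M padic_borel p)
      (padic_lin2 p (int p) (-1) (-1) (- int p))) (padic_cyl p n r \<times> padic_cyl p n s)
    = ennreal (coset_weight p s / real p ^ n) * ennreal (coset_weight p r / real p ^ n)"
  proof (rule emeasure_distr_coset_weighted_haar_lin2_cyl_Times[OF p _ first_row _ n r s])
    show "int p dvd - 1 * x + - int p * y \<longleftrightarrow> int p dvd x" for x y
      using zdvd_reduce[of "int p" "- x" "- y"] by simp
  qed (use coprime(2) in simp)
qed

lemma distr_coset_weighted_haar_lin2_flip_sign: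
  assumes prime: "prime p"
  shows "distr (coset_weighted_haar p \<Otimes>\<^sub>M coset_weighted_haar p) (padic_borel p \<Otimes>\<^sub>M padic_borel p)
      (padic_lin2 p (int p) (-1) 1 (int p))
    = distr (coset_weighted_haar p \<Otimes>\<^sub>M coset_weighted_haar p) (padic_borel p \<Otimes>\<^sub>M padic_borel p)
      (padic_lin2 p (int p) (-1) (-1) (- int p))"
    (is "distr ?M ?P2 ?F = distr ?M ?P2 ?G")
proof -
  have p: "1 < p" using prime prime_gt_1_nat by blast
  have prob_distr: "prob_space (distr ?M ?P2 (padic_lin2 p a b c d))" for a b c d
    using measurable_padic_lin2[of p "coset_weighted_haar p"] prob_space_coset_weighted_haar[OF p] p
    by (intro prob_space.prob_space_distr prob_space_pair) auto
  show ?thesis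
  proof (rule measure_eq_padic_cyl_rectsI)
    show "finite_measure (distr ?M ?P2 ?F)"
      using prob_distr by (auto simp: prob_space_def)
    fix n r s
    consider "n = 0" "r = 0" "s = 0" | "1 \<le> n" "0 \<le> r" "r < int p ^ n" "0 \<le> s" "s < int p ^ n"
      | "padic_cyl p n r \<times> padic_cyl p n s = {}"
      by (cases "0 \<le> r \<and> r < int p ^ n \<and> 0 \<le> s \<and> s < int p ^ n"; cases "n = 0")
        (auto simp: padic_cyl_eq_empty)
    then show "emeasure (distr ?M ?P2 ?F) (padic_cyl p n r \<times> padic_cyl p n s)
        = emeasure (distr ?M ?P2 ?G) (padic_cyl p n r \<times> padic_cyl p n s)"
    proof cases
      case 1
      then have "padic_cyl p n r \<times> padic_cyl p n s = space ?P2"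
        by (simp add: padic_cyl_level_zero space_pair_measure)
      then show ?thesis
        using prob_space.emeasure_space_1[OF prob_distr] by simp
    qed (auto simp: emeasure_distr_coset_weighted_haar_L1_L2_cyl_Times[OF p])
  qed (use p in simp_all)
qed

theorem lemma5:
  fixes p :: nat
  assumes "prime p"
  shows "\<exists>(M :: ((nat \<Rightarrow> int) \<times> (nat \<Rightarrow> int)) measure) \<xi>1 \<xi>2.
     prob_space M \<and>
     \<xi>1 \<in> M \<rightarrow>\<^sub>M padic_borel p \<and> \<xi>2 \<in> M \<rightarrow>\<^sub>M padic_borel p \<and>
     prob_space.indep_var M (padic_borel p) \<xi>1 (padic_borel p) \<xi>2 \<and>
     distr M (padic_borel p \<Otimes>\<^sub>M padic_borel p)
       (\<lambda>\<omega>. (padic_add p (padic_smul p (int p) (\<xi>1 \<omega>)) (padic_neg p (\<xi>2 \<omega>)),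
              padic_add p (\<xi>1 \<omega>) (padic_smul p (int p) (\<xi>2 \<omega>))))
     = distr M (padic_borel p \<Otimes>\<^sub>M padic_borel p)
       (\<lambda>\<omega>. (padic_add p (padic_smul p (int p) (\<xi>1 \<omega>)) (padic_neg p (\<xi>2 \<omega>)),
              padic_neg p (padic_add p (\<xi>1 \<omega>) (padic_smul p (int p) (\<xi>2 \<omega>))))) \<and>
     \<not> padic_I p (distr M (padic_borel p) \<xi>1) \<and>
     \<not> padic_I p (distr M (padic_borel p) \<xi>2)"
proof -
  have p: "1 < p" using assms prime_gt_1_nat by blast
  let ?\<mu> = "coset_weighted_haar p"
  have \<mu>: "prob_space ?\<mu>" by (rule prob_space_coset_weighted_haar[OF p])
  have "distr (?\<mu> \<Otimes>\<^sub>M ?\<mu>) (padic_borel p) fst = ?\<mu>"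
    using prob_space.distr_pair_fst[OF \<mu>, of ?\<mu>] by (simp cong: distr_cong)
  moreover have "distr (?\<mu> \<Otimes>\<^sub>M ?\<mu>) (padic_borel p) snd = ?\<mu>"
    using distr_pair_snd[OF \<mu> \<mu>] by (simp cong: distr_cong)
  moreover have "fst \<in> ?\<mu> \<Otimes>\<^sub>M ?\<mu> \<rightarrow>\<^sub>M padic_borel p" "snd \<in> ?\<mu> \<Otimes>\<^sub>M ?\<mu> \<rightarrow>\<^sub>M padic_borel p"
    by (simp_all cong: measurable_cong_sets)
  moreover have "(\<lambda>\<omega>. (padic_add p (padic_smul p (int p) (fst \<omega>)) (padic_neg p (snd \<omega>)),
      padic_add p (fst \<omega>) (padic_smul p (int p) (snd \<omega>)))) = padic_lin2 p (int p) (-1) 1 (int p)"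
    "(\<lambda>\<omega>. (padic_add p (padic_smul p (int p) (fst \<omega>)) (padic_neg p (snd \<omega>)),
      padic_neg p (padic_add p (fst \<omega>) (padic_smul p (int p) (snd \<omega>))))) = padic_lin2 p (int p) (-1) (-1) (- int p)"
    by (auto simp: padic_lin2_def padic_add_smul_neg_eq_lin padic_add_smul_eq_lin padic_neg_lin)
  ultimately show ?thesis
    using prob_space_pair[OF \<mu> \<mu>] indep_var_fst_snd[OF \<mu> \<mu>] distr_coset_weighted_haar_lin2_flip_sign[OF assms]
      not_padic_I_coset_weighted_haar[OF assms]
    by (intro exI[of _ "?\<mu> \<Otimes>\<^sub>M ?\<mu>"] exI[of _ fst] exI[of _ snd]) simp
qed

end
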